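(* Let $N \ge 1$ and let $W_N$ be the set of binary words of length $N$. Define $\varphi_5 : W_N \to W_N$ by $\varphi_5(u) = v\, 1\, 0^{p+2} v'$ if $u = v 0^p 100 v'$ where $p \geq 1$, $v'$ is a (possibly empty) word, and $v$ is a (possibly empty) word which is either empty or ends with the letter $1$ and such that $v 0^p$ does not contain $0100$ as a contiguous subword; and $\varphi_5(u) = u$ otherwise. Then $|P(\varphi_5(u))| \leq |P(u)|$ for every $u \in W_N$.
   Context: For a binary word $x$, $x^j$ denotes $j$ concatenated copies of $x$, and juxtaposition denotes concatenation. For a binary word $w = w_1 \cdots w_\ell$ of length $\ell$, $P(w)$ is the set of indices $i \geq 2$ such that at least one of the following holds: (i) $\ell \geq i$ and $w_{i-1} w_i = 00$; (ii) $\ell \geq i+2$ and $w_{i-1} w_i w_{i+1} w_{i+2} = 0100$; (iii) $\ell \geq i+3$ and $w_{i-1} \cdots w_{i+3} = 01010$. *)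

theory Defs
  imports Main
begin

text \<open>Binary words are lists over the letters 0 and 1 (as naturals).
  The letter w_j (1-indexed, as in the paper) is w ! (j - 1).\<close>

definition W :: "nat \<Rightarrow> nat list set" where
  "W N = {w. length w = N \<and> set w \<subseteq> {0, 1}}"

definition letter :: "nat list \<Rightarrow> nat \<Rightarrow> nat" where
  "letter w j = w ! (j - 1)"

definition P :: "nat list \<Rightarrow> nat set" where
  "P w = {i. 2 \<le> i \<and>
     ((length w \<ge> i \<and> letter w (i-1) = 0 \<and> letter w i = 0)
    \<or> (length w \<ge> i + 2 \<and> letter w (i-1) = 0 \<and> letter w i = 1
         \<and> letter w (i+1) = 0 \<and> letter w (i+2) = 0)
    \<or> (length w \<ge> i + 3 \<and> letter w (i-1) = 0 \<and> letter w i = 1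
         \<and> letter w (i+1) = 0 \<and> letter w (i+2) = 1 \<and> letter w (i+3) = 0))}"

definition subword :: "nat list \<Rightarrow> nat list \<Rightarrow> bool" where
  "subword x w = (\<exists>a b. w = a @ x @ b)"

definition phi5_dec :: "nat list \<Rightarrow> nat list \<Rightarrow> nat \<Rightarrow> nat list \<Rightarrow> bool" where
  "phi5_dec u v p v' =
     (u = v @ replicate p 0 @ [1, 0, 0] @ v' \<and> p \<ge> 1
      \<and> (v = [] \<or> last v = 1)
      \<and> \<not> subword [0, 1, 0, 0] (v @ replicate p 0))"

definition phi5 :: "nat list \<Rightarrow> nat list" where
  "phi5 u = (if \<exists>v p v'. phi5_dec u v p v'
             then (SOME r. \<exists>v p v'. phi5_dec u v p v' \<and> r = v @ [1] @ replicate (p + 2) 0 @ v')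
             else u)"

end

theory Submission
  imports Defs "HOL-Library.Sublist"
begin

text \<open>Write \<open>u = v 0^p 100 v'\<close>, so \<open>\<phi>\<^sub>5(u) = v 1 0^(p+2) v'\<close>, and let \<open>m = |v|\<close>
  (positions are 0-indexed). An index of \<open>P\<close> marks, shifted by 2, an occurrence of one of
  the words 00, 0100, 01010; we map the occurrences in \<open>\<phi>\<^sub>5(u)\<close> injectively to occurrences
  in \<open>u\<close>. Before position \<open>m\<close> an occurrence cannot run across the factor 11 at the end of
  \<open>v 1\<close>, so it lies inside \<open>v\<close>; none starts at the letter 1 at position \<open>m\<close>; one starting
  inside the block of zeros at \<open>m < j \<le> m + p\<close> is sent to the occurrence of 00 or 0100 at
  \<open>j - 1\<close> in \<open>u\<close>; and from position \<open>m + p + 1\<close> on both words coincide. Only \<open>p \<ge> 1\<close>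
  and the last letter of \<open>v\<close> matter: the condition that \<open>v 0^p\<close> avoids 0100 merely makes
  \<open>\<phi>\<^sub>5\<close> well defined.\<close>

definition P_patterns :: "nat list set" where
  "P_patterns = {[0, 0], [0, 1, 0, 0], [0, 1, 0, 1, 0]}"

definition pattern_starts :: "nat list \<Rightarrow> nat set" where
  "pattern_starts w = {j. \<exists>x\<in>P_patterns. prefix x (drop j w)}"

lemma prefix_Cons_drop_iff:
  "prefix (a # x) (drop j w) \<longleftrightarrow> j < length w \<and> w ! j = a \<and> prefix x (drop (Suc j) w)"
  by (cases "j < length w") (auto simp: Cons_nth_drop_Suc[symmetric])

lemma P_eq_image_pattern_starts: "P w = (\<lambda>j. j + 2) ` pattern_starts w"
proof -
  have "i \<in> P w \<longleftrightarrow> (\<exists>j. i = j + 2 \<and> j \<in> pattern_starts w)" for i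
  proof (cases "2 \<le> i")
    case True
    then obtain j where "i = j + 2" using le_Suc_ex by (metis add.commute)
    then show ?thesis
      by (auto simp: P_def letter_def pattern_starts_def P_patterns_def prefix_Cons_drop_iff
          numeral_eq_Suc)
  qed (auto simp: P_def)
  then show ?thesis by blast
qed

lemma pattern_starts_less_length: "j \<in> pattern_starts w \<Longrightarrow> j < length w"
  by (auto simp: pattern_starts_def P_patterns_def prefix_Cons_drop_iff)

lemma card_P_eq: "card (P w) = card (pattern_starts w)"
  unfolding P_eq_image_pattern_starts by (rule card_image) (simp add: inj_on_def)

lemma finite_pattern_starts: "finite (pattern_starts w)"
  by (rule finite_subset[of _ "{..<length w}"]) (auto dest: pattern_starts_less_length)

lemma P_patterns_not_sublist_11: "x \<in> P_patterns \<Longrightarrow> \<not> sublist [1, 1] x"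
  by (auto simp: P_patterns_def sublist_Cons_right)

lemma prefix_pattern_before_11:
  assumes "x \<in> P_patterns" "prefix x (s @ 1 # t)" "s \<noteq> []" "last s = 1"
  shows "prefix x s"
proof (rule ccontr)
  assume "\<not> prefix x s"
  then obtain r where "x = s @ 1 # r"
    using assms(2) by (auto simp: prefix_append prefix_Cons)
  then have "x = butlast s @ [1, 1] @ r"
    using assms(3,4) by (metis append_Cons append_butlast_last_id append_eq_appendI self_append_conv2)
  then show False
    using P_patterns_not_sublist_11[OF assms(1)] sublist_appendI by metis
qed

lemma pattern_start_not_one: "w ! j = 1 \<Longrightarrow> j \<notin> pattern_starts w"
  by (auto simp: pattern_starts_def P_patterns_def prefix_Cons_drop_iff)

lemma pattern_starts_before_11:
  assumes "j < length v" "last v = 1" "j \<in> pattern_starts (v @ 1 # t)"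
  shows "j \<in> pattern_starts (v @ t')"
proof -
  from assms(3) obtain x where x: "x \<in> P_patterns" "prefix x (drop j v @ 1 # t)"
    using assms(1) by (auto simp: pattern_starts_def)
  have "drop j v \<noteq> []" "last (drop j v) = 1"
    using assms(1,2) by auto
  then have "prefix x (drop j v)"
    using prefix_pattern_before_11 x by blast
  then show ?thesis
    using x(1) assms(1) by (auto simp: pattern_starts_def prefix_append)
qed

lemma pattern_starts_zeros_100:
  assumes "length v < j" "j \<le> length v + p"
  shows "j - 1 \<in> pattern_starts (v @ replicate p 0 @ [1, 0, 0] @ v')"
proof -
  define n where "n = length v + p - (j - 1)"
  have drop_eq: "drop (j - 1) (v @ replicate p 0 @ [1, 0, 0] @ v') = replicate n 0 @ [1, 0, 0] @ v'"
    using assms by (simp add: n_def)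
  have "n = 1 \<or> (\<exists>k. n = Suc (Suc k))"
    using assms by (simp add: n_def) presburger
  then have "\<exists>x\<in>P_patterns. prefix x (replicate n 0 @ [1, 0, 0] @ v')"
    by (auto simp: P_patterns_def)
  then show ?thesis
    unfolding pattern_starts_def drop_eq[symmetric] by simp
qed

lemma card_pattern_starts_phi5_le:
  assumes "p \<ge> 1" "v = [] \<or> last v = 1"
  shows "card (pattern_starts (v @ [1] @ replicate (p + 2) 0 @ v'))
    \<le> card (pattern_starts (v @ replicate p 0 @ [1, 0, 0] @ v'))"
    (is "card (pattern_starts ?F) \<le> card (pattern_starts ?U)")
proof -
  define m where "m = length v"
  define g where "g j = (if m < j \<and> j \<le> m + p then j - 1 else j)" for j
  have m_not_start: "m \<notin> pattern_starts ?F"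
    by (rule pattern_start_not_one) (simp add: m_def)
  have blocks: "?F = (v @ 1 # replicate p 0) @ [0, 0] @ v'" "?U = (v @ replicate p 0 @ [1]) @ [0, 0] @ v'"
    by (simp_all add: replicate_append_same[symmetric])
  have same_tail: "drop j ?F = drop j ?U" if "m + p < j" for j
    unfolding blocks using that by (simp only: drop_append) (simp add: m_def)
  have "g j \<in> pattern_starts ?U" if j: "j \<in> pattern_starts ?F" for j
  proof -
    consider "j < m" | "j = m" | "m < j \<and> j \<le> m + p" | "m + p < j"
      by linarith
    then show ?thesis
    proof cases
      case 1
      then have "last v = 1"
        using assms(2) by (auto simp: m_def)
      then show ?thesis
        using 1 j pattern_starts_before_11[of j v] by (simp add: g_def m_def)
    next
      case 2
      then show ?thesis
        using j m_not_start by simp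
    next
      case 3
      then show ?thesis
        using pattern_starts_zeros_100 by (simp add: g_def m_def)
    next
      case 4
      then show ?thesis
        using j same_tail by (simp add: g_def pattern_starts_def)
    qed
  qed
  moreover have "inj_on g (pattern_starts ?F)"
  proof (rule inj_onI)
    fix x y assume "x \<in> pattern_starts ?F" "y \<in> pattern_starts ?F" "g x = g y"
    then have "x \<noteq> m" "y \<noteq> m" "g x = g y"
      using m_not_start by auto
    then show "x = y"
      by (auto simp: g_def split: if_splits)
  qed
  ultimately show ?thesis
    by (intro card_inj_on_le finite_pattern_starts) auto
qed

theorem lemma4p5:
  fixes N :: nat and u :: "nat list"
  assumes "N \<ge> 1" and "u \<in> W N"
  shows "card (P (phi5 u)) \<le> card (P u)"
proof (cases "\<exists>v p v'. phi5_dec u v p v'")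
  case True
  have "\<exists>v p v'. phi5_dec u v p v' \<and> phi5 u = v @ [1] @ replicate (p + 2) 0 @ v'"
    unfolding phi5_def if_P[OF True] by (rule someI_ex) (use True in blast)
  then obtain v p v' where "u = v @ replicate p 0 @ [1, 0, 0] @ v'" "p \<ge> 1" "v = [] \<or> last v = 1"
    and "phi5 u = v @ [1] @ replicate (p + 2) 0 @ v'"
    unfolding phi5_dec_def by blast
  then show ?thesis
    unfolding card_P_eq by (simp only: card_pattern_starts_phi5_le)
next
  case False
  then show ?thesis
    by (simp add: phi5_def)
qed

end
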